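(* Let $\mathfrak F$ be a semiclosed generalized flag in $V$. Then every nonzero proper closed subspace of $V$ which is stable under $\mathrm{St}_{\mathfrak F}$ is both a union of members of $\mathfrak F$ and an intersection of members of $\mathfrak F$.
   Context: $V,V_*$ are countable-dimensional complex vector spaces with a nondegenerate pairing $\langle\cdot,\cdot\rangle$; $\mathfrak{gl}(V,V_* )=V\otimes V_*$ acts on $V$ by $(v\otimes w)u=\langle u,w\rangle v$. For a subspace $F$ of $V$ (resp. $V_*$), $F^\perp$ is its orthogonal in $V_*$ (resp. $V$); $F$ is closed if $F=F^{\perp\perp}$, and $\overline F:=F^{\perp\perp}$. A chain is a totally ordered (by inclusion) set of subspaces. In a chain, $C'\subsetneq C''$ form an immediate predecessor–successor pair ("pair") if no member lies strictly between them. A generalized flag is a chain $\mathfrak F$ such that (i) every member belongs to some pair of $\mathfrak F$, and (ii) for each nonzero $v\in V$ there is a pair $F'\subset F''$ in $\mathfrak F$ with $v\in F''\setminus F'$. Pairs are indexed by a set $A$: $F'_\alpha\subset F''_\alpha$. $\mathfrak F$ is semiclosed if $\overline{F'_\alpha}\in\{F'_\alpha,F''_\alpha\}$ for all $\alpha\in A$. $\mathrm{St}_{\mathfrak F}$ denotes the stabilizer of $\mathfrak F$ in $\mathfrak{gl}(V,V_* )$ (elements mapping each member into itself). *)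

theory Defs
  imports "HOL-Analysis.Analysis"
begin

text \<open>Setting: V is the type 'v with complex scalar multiplication sV, V_* is the type 'w
  with scalar multiplication sW, and pr is the pairing V \<times> V_* \<rightarrow> \<complex>.\<close>

definition countable_dim :: "(complex \<Rightarrow> 'a::ab_group_add \<Rightarrow> 'a) \<Rightarrow> bool" where
  "countable_dim s \<longleftrightarrow>
     (\<exists>B. countable B \<and> \<not> module.dependent s B \<and> module.span s B = UNIV)"

definition bilinear_pairing ::
  "(complex \<Rightarrow> 'v::ab_group_add \<Rightarrow> 'v) \<Rightarrow> (complex \<Rightarrow> 'w::ab_group_add \<Rightarrow> 'w)
   \<Rightarrow> ('v \<Rightarrow> 'w \<Rightarrow> complex) \<Rightarrow> bool" where
  "bilinear_pairing sV sW pr \<longleftrightarrow>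
     (\<forall>u u' w. pr (u + u') w = pr u w + pr u' w) \<and>
     (\<forall>a u w. pr (sV a u) w = a * pr u w) \<and>
     (\<forall>u w w'. pr u (w + w') = pr u w + pr u w') \<and>
     (\<forall>a u w. pr u (sW a w) = a * pr u w)"

definition nondegenerate :: "('v::zero \<Rightarrow> 'w::zero \<Rightarrow> complex) \<Rightarrow> bool" where
  "nondegenerate pr \<longleftrightarrow>
     (\<forall>u. (\<forall>w. pr u w = 0) \<longrightarrow> u = 0) \<and> (\<forall>w. (\<forall>u. pr u w = 0) \<longrightarrow> w = 0)"

definition perpV :: "('v \<Rightarrow> 'w \<Rightarrow> complex) \<Rightarrow> 'v set \<Rightarrow> 'w set" where
  "perpV pr F = {w. \<forall>v\<in>F. pr v w = 0}"

definition perpW :: "('v \<Rightarrow> 'w \<Rightarrow> complex) \<Rightarrow> 'w set \<Rightarrow> 'v set" where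
  "perpW pr G = {v. \<forall>w\<in>G. pr v w = 0}"

definition closureV :: "('v \<Rightarrow> 'w \<Rightarrow> complex) \<Rightarrow> 'v set \<Rightarrow> 'v set" where
  "closureV pr F = perpW pr (perpV pr F)"

definition closedV :: "('v \<Rightarrow> 'w \<Rightarrow> complex) \<Rightarrow> 'v set \<Rightarrow> bool" where
  "closedV pr F \<longleftrightarrow> F = closureV pr F"

text \<open>gl(V,V_*) = V \<otimes> V_*, as the set of operators u \<mapsto> \<Sum> \<langle>u,w_i\<rangle> v_i (finite sums).\<close>
definition gl :: "(complex \<Rightarrow> 'v::ab_group_add \<Rightarrow> 'v) \<Rightarrow> ('v \<Rightarrow> 'w \<Rightarrow> complex)
   \<Rightarrow> ('v \<Rightarrow> 'v) set" where
  "gl sV pr = {\<phi>. \<exists>xs :: ('v \<times> 'w) list.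
                    \<phi> = (\<lambda>u. sum_list (map (\<lambda>(v, w). sV (pr u w) v) xs))}"

definition is_chain :: "(complex \<Rightarrow> 'v::ab_group_add \<Rightarrow> 'v) \<Rightarrow> 'v set set \<Rightarrow> bool" where
  "is_chain sV \<FF> \<longleftrightarrow> (\<forall>F\<in>\<FF>. module.subspace sV F) \<and>
     (\<forall>F\<in>\<FF>. \<forall>G\<in>\<FF>. F \<subseteq> G \<or> G \<subseteq> F)"

definition is_pair :: "'v set set \<Rightarrow> 'v set \<Rightarrow> 'v set \<Rightarrow> bool" where
  "is_pair \<FF> F' F'' \<longleftrightarrow> F' \<in> \<FF> \<and> F'' \<in> \<FF> \<and> F' \<subset> F'' \<and>
     \<not> (\<exists>C\<in>\<FF>. F' \<subset> C \<and> C \<subset> F'')"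

definition generalized_flag :: "(complex \<Rightarrow> 'v::ab_group_add \<Rightarrow> 'v) \<Rightarrow> 'v set set \<Rightarrow> bool" where
  "generalized_flag sV \<FF> \<longleftrightarrow> is_chain sV \<FF> \<and>
     (\<forall>C\<in>\<FF>. \<exists>F' F''. is_pair \<FF> F' F'' \<and> (C = F' \<or> C = F'')) \<and>
     (\<forall>v. v \<noteq> 0 \<longrightarrow> (\<exists>F' F''. is_pair \<FF> F' F'' \<and> v \<in> F'' \<and> v \<notin> F'))"

definition semiclosed :: "('v \<Rightarrow> 'w \<Rightarrow> complex) \<Rightarrow> 'v set set \<Rightarrow> bool" where
  "semiclosed pr \<FF> \<longleftrightarrow>
     (\<forall>F' F''. is_pair \<FF> F' F'' \<longrightarrow> closureV pr F' \<in> {F', F''})"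

definition St :: "(complex \<Rightarrow> 'v::ab_group_add \<Rightarrow> 'v) \<Rightarrow> ('v \<Rightarrow> 'w \<Rightarrow> complex)
   \<Rightarrow> 'v set set \<Rightarrow> ('v \<Rightarrow> 'v) set" where
  "St sV pr \<FF> = {\<phi> \<in> gl sV pr. \<forall>F\<in>\<FF>. \<phi> ` F \<subseteq> F}"

end

theory Submission
  imports Defs
begin

(* The proof rests on rank-one operators u \<mapsto> \<langle>u,w\<rangle> v: for a
   pair F' \<subset> F'' of \<FF>, v \<in> F'' and w \<in> perpV pr F', such an operator stabilizes \<FF>,
   because every member either contains v or lies inside F'.  Applied to W this
   shows: if some v \<in> F'' - F' lies outside W, then W \<subseteq> closure F'.  Together with
   semiclosedness and the closedness of W it yields the central dichotomy
       for every pair F' \<subset> F'' of \<FF>:   F'' \<subseteq> W  or  W \<subseteq> F',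
   which we call compatibility of W with \<FF>. *)

lemma flag_is_chain: "generalized_flag sV \<FF> \<Longrightarrow> is_chain sV \<FF>"
  unfolding generalized_flag_def by (elim conjE)

lemma flag_member_subspace:
  assumes "generalized_flag sV \<FF>" and "F \<in> \<FF>"
  shows "module.subspace sV F"
  using flag_is_chain[OF assms(1)] assms(2) unfolding is_chain_def by blast

lemma flag_comparable:
  assumes "generalized_flag sV \<FF>" and "F \<in> \<FF>" and "G \<in> \<FF>"
  shows "F \<subseteq> G \<or> G \<subseteq> F"
  using flag_is_chain[OF assms(1)] assms(2,3) unfolding is_chain_def by blast

lemma pair_members:
  assumes "is_pair \<FF> F' F''"
  shows "F' \<in> \<FF>" and "F'' \<in> \<FF>"
  using assms unfolding is_pair_def by simp_all

lemma semiclosed_pair: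
  assumes "semiclosed pr \<FF>" and "is_pair \<FF> F' F''"
  shows "closureV pr F' = F' \<or> closureV pr F' = F''"
  using assms unfolding semiclosed_def by blast

lemma flag_separating_pair:
  assumes "generalized_flag sV \<FF>" and "v \<noteq> 0"
  obtains F' F'' where "is_pair \<FF> F' F''" and "v \<in> F''" and "v \<notin> F'"
proof -
  have "\<forall>v. v \<noteq> 0 \<longrightarrow> (\<exists>F' F''. is_pair \<FF> F' F'' \<and> v \<in> F'' \<and> v \<notin> F')"
    using assms(1) unfolding generalized_flag_def by (elim conjE)
  with assms(2) that show thesis by blast
qed

lemma flag_member_below_pair:
  assumes gf: "generalized_flag sV \<FF>" and p: "is_pair \<FF> F' F''"
    and F: "F \<in> \<FF>" and "v \<in> F''" and "v \<notin> F"
  shows "F \<subseteq> F'"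
proof -
  have "F' \<in> \<FF>" "F'' \<in> \<FF>" and between: "\<not> (F' \<subset> F \<and> F \<subset> F'')"
    using p F unfolding is_pair_def by auto
  then have "F \<subseteq> F'' \<or> F'' \<subseteq> F" and "F \<subseteq> F' \<or> F' \<subseteq> F"
    using F flag_comparable[OF gf] by blast+
  with between show ?thesis using \<open>v \<in> F''\<close> \<open>v \<notin> F\<close> by blast
qed

lemma flag_member_above_pair:
  assumes gf: "generalized_flag sV \<FF>" and p: "is_pair \<FF> F' F''"
    and F: "F \<in> \<FF>" and "F' \<subset> F"
  shows "F'' \<subseteq> F"
proof -
  have "F'' \<in> \<FF>" and between: "\<not> (F' \<subset> F \<and> F \<subset> F'')"
    using p F unfolding is_pair_def by auto
  then have "F \<subseteq> F'' \<or> F'' \<subseteq> F" using F flag_comparable[OF gf] by blast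
  with between show ?thesis using \<open>F' \<subset> F\<close> by blast
qed

lemma closureV_mono: "A \<subseteq> B \<Longrightarrow> closureV pr A \<subseteq> closureV pr B"
  unfolding closureV_def perpV_def perpW_def by blast

lemma closureV_le_closed:
  assumes "A \<subseteq> W" and "closedV pr W"
  shows "closureV pr A \<subseteq> W"
  using closureV_mono[OF assms(1), of pr] assms(2) unfolding closedV_def by simp

definition flag_compatible :: "'v set set \<Rightarrow> 'v set \<Rightarrow> bool" where
  "flag_compatible \<FF> W \<longleftrightarrow> (\<forall>F' F''. is_pair \<FF> F' F'' \<longrightarrow> F'' \<subseteq> W \<or> W \<subseteq> F')"

text \<open>A compatible subspace W \<noteq> 0 is the union of the members of \<FF> it contains:
  a nonzero y \<in> W is separated by a pair F' \<subset> F'', and W \<subseteq> F' is impossible,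
  so y \<in> F'' \<subseteq> W; the vector 0 lies in any such member.\<close>

lemma compatible_union_of_members:
  assumes m: "module sV" and gf: "generalized_flag sV \<FF>"
    and comp: "flag_compatible \<FF> W" and W: "module.subspace sV W" and nz: "W \<noteq> {0}"
  shows "W = \<Union>{F\<in>\<FF>. F \<subseteq> W}"
proof -
  have in_member: "\<exists>F\<in>\<FF>. y \<in> F \<and> F \<subseteq> W" if "y \<in> W" "y \<noteq> 0" for y
  proof -
    obtain F' F'' where p: "is_pair \<FF> F' F''" "y \<in> F''" "y \<notin> F'"
      using flag_separating_pair[OF gf \<open>y \<noteq> 0\<close>] by blast
    then have "F'' \<subseteq> W" using comp \<open>y \<in> W\<close> unfolding flag_compatible_def by blast
    then show ?thesis using p pair_members(2) by blast
  qed
  obtain y0 where "y0 \<in> W" "y0 \<noteq> 0" using nz module.subspace_0[OF m W] by blast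
  then obtain F0 where F0: "F0 \<in> \<FF>" "F0 \<subseteq> W" using in_member by blast
  have "0 \<in> F0" using module.subspace_0[OF m flag_member_subspace[OF gf F0(1)]] .
  then have "W \<subseteq> \<Union>{F\<in>\<FF>. F \<subseteq> W}" using F0 in_member by blast
  then show ?thesis by blast
qed

text \<open>Dually, a compatible subspace is the intersection of the members containing it:
  a vector u \<notin> W is separated by a pair F' \<subset> F'', and F'' \<subseteq> W is impossible,
  so W \<subseteq> F' while u \<notin> F'.\<close>

lemma compatible_intersection_of_members:
  assumes m: "module sV" and gf: "generalized_flag sV \<FF>"
    and comp: "flag_compatible \<FF> W" and W: "module.subspace sV W"
  shows "W = \<Inter>{F\<in>\<FF>. W \<subseteq> F}"
proof -
  have "\<exists>F\<in>\<FF>. W \<subseteq> F \<and> u \<notin> F" if "u \<notin> W" for u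
  proof -
    have "u \<noteq> 0" using \<open>u \<notin> W\<close> module.subspace_0[OF m W] by blast
    then obtain F' F'' where p: "is_pair \<FF> F' F''" "u \<in> F''" "u \<notin> F'"
      using flag_separating_pair[OF gf] by blast
    then have "W \<subseteq> F'" using comp \<open>u \<notin> W\<close> unfolding flag_compatible_def by blast
    then show ?thesis using p pair_members(1) by blast
  qed
  then show ?thesis by blast
qed

locale complex_module = module scale for scale :: "complex \<Rightarrow> 'v::ab_group_add \<Rightarrow> 'v"
begin

lemma rank_one_in_St:
  assumes gf: "generalized_flag scale \<FF>" and p: "is_pair \<FF> F' F''"
    and v: "v \<in> F''" and w: "w \<in> perpV pr F'"
  shows "(\<lambda>u. scale (pr u w) v) \<in> St scale pr \<FF>"
proof -
  have "(\<lambda>u. scale (pr u w) v) \<in> gl scale pr"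
    unfolding gl_def by (rule CollectI, rule exI[of _ "[(v, w)]"]) simp
  moreover have "scale (pr u w) v \<in> F" if F: "F \<in> \<FF>" and u: "u \<in> F" for F u
  proof (cases "v \<in> F")
    case True
    then show ?thesis using subspace_scale flag_member_subspace[OF gf F] by blast
  next
    case False
    then have "F \<subseteq> F'" using flag_member_below_pair[OF gf p F v] by blast
    then have "pr u w = 0" using u w unfolding perpV_def by blast
    then show ?thesis using subspace_0 flag_member_subspace[OF gf F] by simp
  qed
  ultimately show ?thesis unfolding St_def by blast
qed

text \<open>Otherwise the rank-one
  operator of \<open>rank_one_in_St\<close> would map some x \<in> W to a nonzero multiple of v.\<close>

lemma stable_below_closure:
  assumes gf: "generalized_flag scale \<FF>" and W: "subspace W"
    and stab: "\<forall>\<phi>\<in>St scale pr \<FF>. \<phi> ` W \<subseteq> W"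
    and p: "is_pair \<FF> F' F''" and v: "v \<in> F''" and vW: "v \<notin> W"
  shows "W \<subseteq> closureV pr F'"
proof
  fix x assume x: "x \<in> W"
  show "x \<in> closureV pr F'"
  proof (rule ccontr)
    assume "x \<notin> closureV pr F'"
    then obtain w where w: "w \<in> perpV pr F'" and nz: "pr x w \<noteq> 0"
      unfolding closureV_def perpW_def by blast
    have "(\<lambda>u. scale (pr u w) v) ` W \<subseteq> W"
      using stab rank_one_in_St[OF gf p v w] by (rule bspec)
    then have "scale (pr x w) v \<in> W" using x by blast
    then have "scale (inverse (pr x w)) (scale (pr x w) v) \<in> W"
      by (rule subspace_scale[OF W])
    moreover have "scale (inverse (pr x w)) (scale (pr x w) v) = v"
      using nz by simp
    ultimately show False using vW by simp
  qed
qed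

text \<open>For v \<in> F' - W separated by a pair G' \<subset> G'' we get
  G'' \<subseteq> F', and semiclosedness puts closure G' inside F'; but W lies in
  closure G' by \<open>stable_below_closure\<close>.\<close>

lemma stable_contains_lower:
  assumes gf: "generalized_flag scale \<FF>" and sc: "semiclosed pr \<FF>"
    and W: "subspace W" and stab: "\<forall>\<phi>\<in>St scale pr \<FF>. \<phi> ` W \<subseteq> W"
    and p: "is_pair \<FF> F' F''" and notle: "\<not> W \<subseteq> F'"
  shows "F' \<subseteq> W"
proof
  fix v assume vF: "v \<in> F'"
  show "v \<in> W"
  proof (rule ccontr)
    assume vW: "v \<notin> W"
    then have "v \<noteq> 0" using subspace_0[OF W] by blast
    then obtain G' G'' where q: "is_pair \<FF> G' G''" and "v \<in> G''" and "v \<notin> G'"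
      using flag_separating_pair[OF gf] by blast
    have "G' \<subseteq> F' \<or> F' \<subseteq> G'"
      using flag_comparable[OF gf pair_members(1)[OF q] pair_members(1)[OF p]] .
    then have "G' \<subset> F'" using vF \<open>v \<notin> G'\<close> by blast
    then have "G'' \<subseteq> F'" by (rule flag_member_above_pair[OF gf q pair_members(1)[OF p]])
    moreover have "closureV pr G' = G' \<or> closureV pr G' = G''" using semiclosed_pair[OF sc q] .
    moreover have "W \<subseteq> closureV pr G'"
      using stable_below_closure[OF gf W stab q \<open>v \<in> G''\<close> vW] .
    ultimately show False using \<open>G' \<subset> F'\<close> notle by blast
  qed
qed

lemma stable_pair_dichotomy:
  assumes gf: "generalized_flag scale \<FF>" and sc: "semiclosed pr \<FF>"
    and W: "subspace W" and cl: "closedV pr W"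
    and stab: "\<forall>\<phi>\<in>St scale pr \<FF>. \<phi> ` W \<subseteq> W"
    and p: "is_pair \<FF> F' F''"
  shows "F'' \<subseteq> W \<or> W \<subseteq> F'"
proof (rule disjCI)
  assume "\<not> W \<subseteq> F'"
  then have F'W: "F' \<subseteq> W" using stable_contains_lower[OF gf sc W stab p] by blast
  show "F'' \<subseteq> W"
  proof (rule ccontr)
    assume "\<not> F'' \<subseteq> W"
    then obtain v where "v \<in> F''" "v \<notin> W" by blast
    then have "W \<subseteq> closureV pr F'" using stable_below_closure[OF gf W stab p] by blast
    moreover have "closureV pr F' \<subseteq> W" using closureV_le_closed[OF F'W cl] .
    moreover have "closureV pr F' = F' \<or> closureV pr F' = F''" using semiclosed_pair[OF sc p] .
    ultimately show False using \<open>\<not> W \<subseteq> F'\<close> \<open>\<not> F'' \<subseteq> W\<close> by blast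
  qed
qed

corollary stable_flag_compatible:
  assumes "generalized_flag scale \<FF>" and "semiclosed pr \<FF>"
    and "subspace W" and "closedV pr W" and "\<forall>\<phi>\<in>St scale pr \<FF>. \<phi> ` W \<subseteq> W"
  shows "flag_compatible \<FF> W"
  unfolding flag_compatible_def using stable_pair_dichotomy[OF assms] by blast

end

text \<open>The argument uses only that \<FF> is a semiclosed generalized flag and that W is a
  nonzero closed stable subspace; the remaining hypotheses describe the ambient setting.\<close>

theorem lemma3p1:
  fixes sV :: "complex \<Rightarrow> 'v::ab_group_add \<Rightarrow> 'v"
    and sW :: "complex \<Rightarrow> 'w::ab_group_add \<Rightarrow> 'w"
    and pr :: "'v \<Rightarrow> 'w \<Rightarrow> complex"
    and \<FF> :: "'v set set"
    and W :: "'v set"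
  assumes "vector_space sV" and "vector_space sW"
    and "countable_dim sV" and "countable_dim sW"
    and "bilinear_pairing sV sW pr" and "nondegenerate pr"
    and "generalized_flag sV \<FF>" and "semiclosed pr \<FF>"
    and "module.subspace sV W" and "closedV pr W"
    and "W \<noteq> {0}" and "W \<noteq> UNIV"
    and "\<forall>\<phi>\<in>St sV pr \<FF>. \<phi> ` W \<subseteq> W"
  shows "(\<exists>S\<subseteq>\<FF>. W = \<Union>S) \<and> (\<exists>T\<subseteq>\<FF>. W = \<Inter>T)"
proof -
  interpret vector_space sV by fact
  interpret complex_module sV ..
  have m: "module sV" ..
  have comp: "flag_compatible \<FF> W"
    using stable_flag_compatible[OF assms(7-10,13)] .
  have union: "W = \<Union>{F\<in>\<FF>. F \<subseteq> W}"
    using compatible_union_of_members[OF m assms(7) comp assms(9,11)] .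
  have inter: "W = \<Inter>{F\<in>\<FF>. W \<subseteq> F}"
    using compatible_intersection_of_members[OF m assms(7) comp assms(9)] .
  show ?thesis
  proof
    show "\<exists>S\<subseteq>\<FF>. W = \<Union>S" using union by (intro exI[of _ "{F\<in>\<FF>. F \<subseteq> W}"]) blast
    show "\<exists>T\<subseteq>\<FF>. W = \<Inter>T" using inter by (intro exI[of _ "{F\<in>\<FF>. W \<subseteq> F}"]) blast
  qed
qed

end
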